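(* Consider the mining game with $N\ge2$ miners, costs $0<c_1\le\dots\le c_N$, reward $R>0$ and capacity $\gamma\ge0$, at parameter values where the number $n$ of active miners does not change under small perturbations of the parameters. Let $i\ne j$ be active miners. Then $$\frac{\partial h_i^*}{\partial c_i}=\Delta_{i,1}+\Delta_{i,2}<0,\qquad \frac{\partial h_i^*}{\partial c_j}=\Delta_{i,2},$$ where $\Delta_{i,1}<0$ and $\Delta_{i,2}>0\iff h_i^*/H^*<1/2$. Furthermore, $$\frac{\partial}{\partial c_i}\frac{h_i^*}{H^*}=\widetilde\Delta_{i,1}+\widetilde\Delta_{i,2}<0,\qquad \frac{\partial}{\partial c_j}\frac{h_i^*}{H^*}=\widetilde\Delta_{i,2}>0,$$ where $\widetilde\Delta_{i,1}<0$ and $\widetilde\Delta_{i,2}>0$.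
   Context: Mining game: $N\ge2$ miners with costs-per-hash $0<c_1\le\dots\le c_N$; each miner $i$ chooses $h_i\ge0$, $H=\sum_j h_j$, payoff $\frac{h_i}{H}R-c_ih_i-\frac{\gamma}{2}h_i^2$ if $H>0$ and $0$ if $H=0$, with $R>0$, $\gamma\ge0$. The pure Nash equilibrium $h^*$ is unique; its active miners (those with $h_i^*>0$) are $1,\dots,n$ for some $2\le n\le N$, and with $c^{(n)}=\sum_{i=1}^nc_i$ one has $H^*=g(c_1,\dots,c_n,\gamma,R):=\frac{\sqrt{(c^{(n)})^2+4(n-1)R\gamma}-c^{(n)}}{2\gamma}$ for $\gamma>0$ (and $(n-1)R/c^{(n)}$ for $\gamma=0$), and $h_i^*=f_i(c_i,\gamma,R,H^* )$ for $i\le n$, where $f_i(c,\gamma,R,x):=x\frac{R-cx}{R+\gamma x^2}$. Derivatives are taken of these closed-form expressions with $n$ held fixed. Definitions: $\Delta_{i,1}:=\frac{\partial f_i}{\partial c}(c_i,\gamma,R,H^* )$ (direct effect, fourth argument held fixed) and $\Delta_{i,2}:=\frac{\partial f_i}{\partial x}(c_i,\gamma,R,H^* )\cdot\frac{\partial g}{\partial c_i}$ (indirect effect through $H^*$; note $\partial g/\partial c_i=\partial g/\partial c_j$). Similarly, $\widetilde\Delta_{i,1}$ is the partial derivative of $f_i(c,\gamma,R,x)/x$ in $c$ with $x=H^*$ held fixed, and $\widetilde\Delta_{i,2}:=\frac{\partial}{\partial x}\big(f_i(c_i,\gamma,R,x)/x\big)\big|_{x=H^*}\cdot\frac{\partial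 g}{\partial c_i}$. *)

theory Defs
  imports "HOL-Analysis.Analysis"
begin

definition valid_params :: "nat \<Rightarrow> (nat \<Rightarrow> real) \<Rightarrow> real \<Rightarrow> real \<Rightarrow> bool" where
  "valid_params N c R \<gamma> \<longleftrightarrow> 2 \<le> N \<and> (\<forall>i\<in>{1..N}. 0 < c i) \<and>
     (\<forall>i j. 1 \<le> i \<longrightarrow> i \<le> j \<longrightarrow> j \<le> N \<longrightarrow> c i \<le> c j) \<and> 0 < R \<and> 0 \<le> \<gamma>"

definition payoff :: "nat \<Rightarrow> (nat \<Rightarrow> real) \<Rightarrow> real \<Rightarrow> real \<Rightarrow> (nat \<Rightarrow> real) \<Rightarrow> nat \<Rightarrow> real" where
  "payoff N c R \<gamma> h i =
     (let H = (\<Sum>j=1..N. h j) in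
      if H > 0 then h i / H * R - c i * h i - \<gamma> / 2 * (h i)\<^sup>2 else 0)"

definition is_NE :: "nat \<Rightarrow> (nat \<Rightarrow> real) \<Rightarrow> real \<Rightarrow> real \<Rightarrow> (nat \<Rightarrow> real) \<Rightarrow> bool" where
  "is_NE N c R \<gamma> h \<longleftrightarrow> (\<forall>i\<in>{1..N}. 0 \<le> h i) \<and>
     (\<forall>i\<in>{1..N}. \<forall>y\<ge>0. payoff N c R \<gamma> (h(i := y)) i \<le> payoff N c R \<gamma> h i)"

definition active_set :: "nat \<Rightarrow> (nat \<Rightarrow> real) \<Rightarrow> nat set" where
  "active_set N h = {i\<in>{1..N}. 0 < h i}"

text \<open>Closed form g of the aggregate hash rate with n active miners (costs c 1..c n).\<close>
definition gH :: "nat \<Rightarrow> (nat \<Rightarrow> real) \<Rightarrow> real \<Rightarrow> real \<Rightarrow> real" where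
  "gH n c \<gamma> R =
     (let S = (\<Sum>i=1..n. c i) in
      if \<gamma> = 0 then (real n - 1) * R / S
      else (sqrt (S\<^sup>2 + 4 * (real n - 1) * R * \<gamma>) - S) / (2 * \<gamma>))"

definition fh :: "real \<Rightarrow> real \<Rightarrow> real \<Rightarrow> real \<Rightarrow> real" where
  "fh c \<gamma> R x = x * (R - c * x) / (R + \<gamma> * x\<^sup>2)"

end

(*
  Summing the first-order conditions h_k (R + gamma H^2) = H (R - c_k H) of the active miners
  shows that the equilibrium aggregate H is the nonnegative root of
  gamma H^2 + S H = (n - 1) R, with S the total cost of the active miners, so H = g.
  Implicit differentiation of this quadratic gives dg/dc_k = -H / (2 gamma H + S) < 0 for every
  active k. The partial derivatives of f and of f/x are explicit rational functions, and every
  sign claim reduces to a polynomial inequality: it uses c_i H < R (miner i is active), and for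
  the own-cost effects also R <= gamma H^2 + S H (at least two miners are active), resp. c_i < S.
*)

theory Submission
  imports Defs
begin

lemma sum_fun_upd:
  fixes f :: "'a \<Rightarrow> 'b::ab_group_add"
  assumes "finite A" "k \<in> A"
  shows "sum (f(k := t)) A = sum f A - f k + t"
proof -
  have "sum (f(k := t)) A = t + sum (f(k := t)) (A - {k})"
    using assms by (simp add: sum.remove)
  also have "sum (f(k := t)) (A - {k}) = sum f (A - {k})"
    by (rule sum.cong) auto
  finally show ?thesis
    using assms by (simp add: sum_diff1)
qed

lemma valid_params_cost_pos:
  "valid_params N c R \<gamma> \<Longrightarrow> k \<in> {1..N} \<Longrightarrow> 0 < c k"
  unfolding valid_params_def by blast

lemma valid_params_cost_less_sum:
  assumes params: "valid_params N c R \<gamma>" and n: "n \<le> N"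
    and i: "i \<in> {1..n}" and j: "j \<in> {1..n}" and ij: "i \<noteq> j"
  shows "c i < (\<Sum>k=1..n. c k)"
proof -
  have c_pos: "0 < c k" if "k \<in> {1..n}" for k
    using valid_params_cost_pos[OF params] that n by simp
  have "c i + c j = (\<Sum>k\<in>{i, j}. c k)"
    using ij by simp
  also have "\<dots> \<le> (\<Sum>k=1..n. c k)"
    using i j c_pos by (intro sum_mono2) (auto intro: less_imp_le)
  finally show ?thesis
    using c_pos[OF j] by linarith
qed

lemma is_NE_aggregate_pos:
  assumes "is_NE N c R \<gamma> h" "k \<in> {1..N}" "0 < h k"
  shows "0 < (\<Sum>j=1..N. h j)"
proof -
  have "h k \<le> (\<Sum>j=1..N. h j)"
    using assms by (intro member_le_sum) (auto simp: is_NE_def)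
  then show ?thesis
    using assms(3) by linarith
qed

lemma is_NE_first_order_condition:
  assumes NE: "is_NE N c R \<gamma> h" and k: "k \<in> {1..N}" and hk: "0 < h k"
  defines "H \<equiv> \<Sum>j=1..N. h j"
  shows "h k * (R + \<gamma> * H\<^sup>2) = H * (R - c k * H)"
proof -
  define B where "B = H - h k"
  have B: "0 \<le> B"
  proof -
    have "B = (\<Sum>j\<in>{1..N} - {k}. h j)"
      unfolding B_def H_def using k by (simp add: sum_diff1)
    also have "0 \<le> \<dots>"
      using NE unfolding is_NE_def by (auto intro: sum_nonneg)
    finally show ?thesis .
  qed
  define \<phi> where "\<phi> y = y / (B + y) * R - c k * y - \<gamma> / 2 * y\<^sup>2" for y
  have payoff: "payoff N c R \<gamma> (h(k := y)) k = \<phi> y" if "0 < y" for y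
  proof -
    have "(\<Sum>j=1..N. (h(k := y)) j) = B + y"
      using sum_fun_upd[of "{1..N}" k h y] k unfolding B_def H_def by simp
    then show ?thesis
      unfolding payoff_def Let_def \<phi>_def using B that by simp
  qed
  have "(\<phi> has_real_derivative R * B / (B + h k)\<^sup>2 - c k - \<gamma> * h k) (at (h k))"
    unfolding \<phi>_def using B hk
    apply (intro derivative_eq_intros)
    apply (rule refl | (simp; fail))+
    apply (simp add: divide_simps)
    apply (simp add: algebra_simps power2_eq_square)
    done
  moreover have "\<forall>y. \<bar>h k - y\<bar> < h k \<longrightarrow> \<phi> y \<le> \<phi> (h k)"
  proof (intro allI impI)
    fix y assume "\<bar>h k - y\<bar> < h k"
    then have "0 < y" by linarith
    then have "payoff N c R \<gamma> (h(k := y)) k \<le> payoff N c R \<gamma> h k"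
      using NE k unfolding is_NE_def by simp
    then show "\<phi> y \<le> \<phi> (h k)"
      using payoff[OF \<open>0 < y\<close>] payoff[OF hk] by simp
  qed
  ultimately have "R * B / (B + h k)\<^sup>2 - c k - \<gamma> * h k = 0"
    using DERIV_local_max hk by blast
  moreover have "B + h k = H" "0 < H"
    unfolding B_def H_def using is_NE_aggregate_pos[OF NE k hk] by simp_all
  ultimately show ?thesis
    unfolding B_def by (simp add: field_simps power2_eq_square)
qed

lemma is_NE_cost_aggregate_less:
  assumes NE: "is_NE N c R \<gamma> h" and k: "k \<in> {1..N}" and hk: "0 < h k"
    and R: "0 < R" and \<gamma>: "0 \<le> \<gamma>"
  shows "c k * (\<Sum>j=1..N. h j) < R"
proof -
  have "0 < h k * (R + \<gamma> * (\<Sum>j=1..N. h j)\<^sup>2)"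
    using hk R \<gamma> by (simp add: add_pos_nonneg)
  then have "0 < (\<Sum>j=1..N. h j) * (R - c k * (\<Sum>j=1..N. h j))"
    using is_NE_first_order_condition[OF NE k hk] by simp
  then show ?thesis
    using is_NE_aggregate_pos[OF NE k hk] by (simp add: zero_less_mult_iff)
qed

lemma is_NE_aggregate_quadratic:
  assumes NE: "is_NE N c R \<gamma> h" and active: "active_set N h = {1..n}" and n: "1 \<le> n"
  defines "H \<equiv> \<Sum>j=1..N. h j"
  shows "\<gamma> * H\<^sup>2 + (\<Sum>k=1..n. c k) * H = (real n - 1) * R"
proof -
  have active_iff: "k \<in> {1..n} \<longleftrightarrow> k \<in> {1..N} \<and> 0 < h k" for k
    using active unfolding active_set_def by blast
  have H_active: "H = (\<Sum>k=1..n. h k)"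
    unfolding H_def
  proof (rule sum.mono_neutral_right)
    show "\<forall>k\<in>{1..N} - {1..n}. h k = 0"
    proof
      fix k assume "k \<in> {1..N} - {1..n}"
      then have "0 \<le> h k" "\<not> 0 < h k"
        using NE active_iff[of k] unfolding is_NE_def by auto
      then show "h k = 0" by simp
    qed
  qed (use active_iff in auto)
  have "0 < H"
    using is_NE_aggregate_pos[OF NE, of 1] active_iff[of 1] n unfolding H_def by simp
  have "H * (R + \<gamma> * H\<^sup>2) = (\<Sum>k=1..n. h k * (R + \<gamma> * H\<^sup>2))"
    by (simp add: H_active sum_distrib_right)
  also have "\<dots> = (\<Sum>k=1..n. H * (R - c k * H))"
    using is_NE_first_order_condition[OF NE] active_iff unfolding H_def by (intro sum.cong) auto
  also have "\<dots> = H * (real n * R - (\<Sum>k=1..n. c k) * H)"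
    by (simp add: sum_distrib_left[symmetric] sum_subtractf sum_distrib_right)
  finally have "R + \<gamma> * H\<^sup>2 = real n * R - (\<Sum>k=1..n. c k) * H"
    using \<open>0 < H\<close> by simp
  then show ?thesis
    by (simp add: algebra_simps)
qed

lemma gH_eq_nonneg_root:
  fixes n :: nat and c :: "nat \<Rightarrow> real"
  defines "S \<equiv> \<Sum>k=1..n. c k"
  assumes \<gamma>: "0 \<le> \<gamma>" and S: "0 < S" and x: "0 \<le> x"
    and root: "\<gamma> * x\<^sup>2 + S * x = (real n - 1) * R"
  shows "gH n c \<gamma> R = x"
proof (cases "\<gamma> = 0")
  case True
  then have "S * x = (real n - 1) * R"
    using root by simp
  then show ?thesis
    using True S unfolding gH_def Let_def S_def[symmetric] by (simp add: divide_eq_eq mult.commute)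
next
  case False
  have "(2 * \<gamma> * x + S)\<^sup>2 = S\<^sup>2 + 4 * \<gamma> * (\<gamma> * x\<^sup>2 + S * x)"
    by (simp add: power2_eq_square algebra_simps)
  also have "\<dots> = S\<^sup>2 + 4 * (real n - 1) * R * \<gamma>"
    unfolding root by (simp add: mult_ac)
  finally have "sqrt (S\<^sup>2 + 4 * (real n - 1) * R * \<gamma>) = 2 * \<gamma> * x + S"
    using \<gamma> S x by (intro real_sqrt_unique) simp_all
  then show ?thesis
    using False unfolding gH_def Let_def S_def[symmetric] by simp
qed

lemma is_NE_aggregate_eq_gH:
  assumes params: "valid_params N c R \<gamma>" and NE: "is_NE N c R \<gamma> h"
    and active: "active_set N h = {1..n}" and n: "1 \<le> n"
  shows "(\<Sum>j=1..N. h j) = gH n c \<gamma> R"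
proof (rule sym, rule gH_eq_nonneg_root)
  have "0 < c k" if "k \<in> {1..n}" for k
    using valid_params_cost_pos[OF params] active that unfolding active_set_def by blast
  then show "0 < (\<Sum>k=1..n. c k)"
    using n by (intro sum_pos) auto
  show "0 \<le> \<gamma>"
    using params unfolding valid_params_def by simp
  show "0 \<le> (\<Sum>j=1..N. h j)"
    using NE unfolding is_NE_def by (intro sum_nonneg) blast
  show "\<gamma> * (\<Sum>j=1..N. h j)\<^sup>2 + (\<Sum>k=1..n. c k) * (\<Sum>j=1..N. h j) = (real n - 1) * R"
    by (rule is_NE_aggregate_quadratic[OF NE active n])
qed

text \<open>Implicit differentiation of \<open>\<gamma> x\<^sup>2 + S x = (n - 1) R\<close> with respect to \<open>S\<close>.\<close>
definition gH_dcost :: "real \<Rightarrow> real \<Rightarrow> real \<Rightarrow> real" where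
  "gH_dcost \<gamma> S x = - x / (2 * \<gamma> * x + S)"

lemma gH_has_real_derivative_cost:
  fixes n :: nat and c :: "nat \<Rightarrow> real"
  defines "S \<equiv> \<Sum>i=1..n. c i"
  assumes k: "k \<in> {1..n}" and S: "0 < S" and \<gamma>: "0 \<le> \<gamma>" and R: "0 \<le> R"
  shows "((\<lambda>t. gH n (c(k := t)) \<gamma> R) has_real_derivative gH_dcost \<gamma> S (gH n c \<gamma> R)) (at (c k))"
proof -
  have S_upd: "(\<Sum>i=1..n. (c(k := t)) i) = S - c k + t" for t
    using sum_fun_upd[of "{1..n}" k c t] k unfolding S_def by simp
  have n: "1 \<le> real n"
    using k by simp
  show ?thesis
  proof (cases "\<gamma> = 0")
    case True
    have "((\<lambda>t. (real n - 1) * R / (S - c k + t)) has_real_derivative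
            gH_dcost \<gamma> S ((real n - 1) * R / S)) (at (c k))"
      using S True unfolding gH_dcost_def
      by (auto intro!: derivative_eq_intros simp: field_simps power2_eq_square)
    then show ?thesis
      using True unfolding gH_def Let_def S_upd S_def[symmetric] by simp
  next
    case False
    define K where "K = 4 * (real n - 1) * R * \<gamma>"
    have "0 \<le> K"
      unfolding K_def using n R \<gamma> by simp
    then have "0 < S\<^sup>2 + K"
      using S by (simp add: add_pos_nonneg)
    then have "((\<lambda>t. (sqrt ((S - c k + t)\<^sup>2 + K) - (S - c k + t)) / (2 * \<gamma>)) has_real_derivative
            gH_dcost \<gamma> S ((sqrt (S\<^sup>2 + K) - S) / (2 * \<gamma>))) (at (c k))"
      using S False unfolding gH_dcost_def
      by (auto intro!: derivative_eq_intros simp: field_simps power2_eq_square)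
    then show ?thesis
      using False unfolding gH_def Let_def S_upd S_def[symmetric] K_def by simp
  qed
qed

definition fh_dcost :: "real \<Rightarrow> real \<Rightarrow> real \<Rightarrow> real" where
  "fh_dcost \<gamma> R x = - x\<^sup>2 / (R + \<gamma> * x\<^sup>2)"

definition fh_drate :: "real \<Rightarrow> real \<Rightarrow> real \<Rightarrow> real \<Rightarrow> real" where
  "fh_drate c \<gamma> R x = R * (R - \<gamma> * x\<^sup>2 - 2 * c * x) / (R + \<gamma> * x\<^sup>2)\<^sup>2"

definition share_dcost :: "real \<Rightarrow> real \<Rightarrow> real \<Rightarrow> real" where
  "share_dcost \<gamma> R x = - x / (R + \<gamma> * x\<^sup>2)"

definition share_drate :: "real \<Rightarrow> real \<Rightarrow> real \<Rightarrow> real \<Rightarrow> real" where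
  "share_drate c \<gamma> R x = - (c * R - c * \<gamma> * x\<^sup>2 + 2 * R * \<gamma> * x) / (R + \<gamma> * x\<^sup>2)\<^sup>2"

lemma fh_has_real_derivative:
  assumes A: "(A has_real_derivative A') (at t)" and X: "(X has_real_derivative X') (at t)"
    and den: "R + \<gamma> * (X t)\<^sup>2 \<noteq> 0"
  shows "((\<lambda>s. fh (A s) \<gamma> R (X s)) has_real_derivative
           fh_dcost \<gamma> R (X t) * A' + fh_drate (A t) \<gamma> R (X t) * X') (at t)"
  unfolding fh_def fh_dcost_def fh_drate_def
  using A X den
  apply (intro derivative_eq_intros)
  apply (rule A X refl | (simp; fail))+
  apply (simp add: divide_simps)
  apply (simp add: algebra_simps power2_eq_square)
  done

lemma share_has_real_derivative:
  assumes A: "(A has_real_derivative A') (at t)" and X: "(X has_real_derivative X') (at t)"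
    and den: "R + \<gamma> * (X t)\<^sup>2 \<noteq> 0" and "X t \<noteq> 0"
  shows "((\<lambda>s. fh (A s) \<gamma> R (X s) / X s) has_real_derivative
           share_dcost \<gamma> R (X t) * A' + share_drate (A t) \<gamma> R (X t) * X') (at t)"
  unfolding fh_def share_dcost_def share_drate_def
  using assms
  apply (intro derivative_eq_intros)
  apply (rule A X refl | (simp; fail))+
  apply (simp add: divide_simps)
  apply (simp add: algebra_simps power2_eq_square)
  done

lemma deriv_fh_cost:
  assumes "R + \<gamma> * x\<^sup>2 \<noteq> 0"
  shows "deriv (\<lambda>t. fh t \<gamma> R x) c = fh_dcost \<gamma> R x"
proof -
  have "((\<lambda>t. fh t \<gamma> R x) has_real_derivative fh_dcost \<gamma> R x * 1 + fh_drate c \<gamma> R x * 0) (at c)"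
    using assms by (intro fh_has_real_derivative DERIV_ident DERIV_const) simp
  then show ?thesis
    by (simp add: DERIV_imp_deriv)
qed

lemma deriv_fh_rate:
  assumes "R + \<gamma> * x\<^sup>2 \<noteq> 0"
  shows "deriv (\<lambda>x. fh c \<gamma> R x) x = fh_drate c \<gamma> R x"
proof -
  have "((\<lambda>x. fh c \<gamma> R x) has_real_derivative fh_dcost \<gamma> R x * 0 + fh_drate c \<gamma> R x * 1) (at x)"
    using assms by (intro fh_has_real_derivative DERIV_ident DERIV_const) simp
  then show ?thesis
    by (simp add: DERIV_imp_deriv)
qed

lemma deriv_share_cost:
  assumes "R + \<gamma> * x\<^sup>2 \<noteq> 0" "x \<noteq> 0"
  shows "deriv (\<lambda>t. fh t \<gamma> R x / x) c = share_dcost \<gamma> R x"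
proof -
  have "((\<lambda>t. fh t \<gamma> R x / x) has_real_derivative share_dcost \<gamma> R x * 1 + share_drate c \<gamma> R x * 0) (at c)"
    using assms by (intro share_has_real_derivative DERIV_ident DERIV_const) simp_all
  then show ?thesis
    by (simp add: DERIV_imp_deriv)
qed

lemma deriv_share_rate:
  assumes "R + \<gamma> * x\<^sup>2 \<noteq> 0" "x \<noteq> 0"
  shows "deriv (\<lambda>x. fh c \<gamma> R x / x) x = share_drate c \<gamma> R x"
proof -
  have "((\<lambda>x. fh c \<gamma> R x / x) has_real_derivative share_dcost \<gamma> R x * 0 + share_drate c \<gamma> R x * 1) (at x)"
    using assms by (intro share_has_real_derivative DERIV_ident DERIV_const) simp_all
  then show ?thesis
    by (simp add: DERIV_imp_deriv)
qed

lemma gH_dcost_neg: "0 \<le> \<gamma> \<Longrightarrow> 0 < S \<Longrightarrow> 0 < x \<Longrightarrow> gH_dcost \<gamma> S x < 0"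
  unfolding gH_dcost_def by (simp add: add_nonneg_pos)

lemma fh_dcost_neg: "0 < R + \<gamma> * x\<^sup>2 \<Longrightarrow> x \<noteq> 0 \<Longrightarrow> fh_dcost \<gamma> R x < 0"
  unfolding fh_dcost_def by simp

lemma share_dcost_neg: "0 < R + \<gamma> * x\<^sup>2 \<Longrightarrow> 0 < x \<Longrightarrow> share_dcost \<gamma> R x < 0"
  unfolding share_dcost_def by simp

lemma fh_drate_neg_iff:
  assumes "0 < R" "0 < R + \<gamma> * x\<^sup>2" "0 < x"
  shows "fh_drate c \<gamma> R x < 0 \<longleftrightarrow> fh c \<gamma> R x / x < 1 / 2"
proof -
  have "fh_drate c \<gamma> R x < 0 \<longleftrightarrow> R - \<gamma> * x\<^sup>2 - 2 * c * x < 0"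
    unfolding fh_drate_def using assms by (simp add: divide_less_0_iff mult_less_0_iff)
  also have "\<dots> \<longleftrightarrow> (R - c * x) / (R + \<gamma> * x\<^sup>2) < 1 / 2"
    using assms by (simp add: pos_divide_less_eq) arith
  also have "(R - c * x) / (R + \<gamma> * x\<^sup>2) = fh c \<gamma> R x / x"
    unfolding fh_def using assms by simp
  finally show ?thesis .
qed

lemma share_drate_neg:
  assumes R: "0 < R" and \<gamma>: "0 \<le> \<gamma>" and c: "0 < c" and x: "0 < x" and cx: "c * x < R"
  shows "share_drate c \<gamma> R x < 0"
proof -
  have "(c * x) * (\<gamma> * x) \<le> R * (\<gamma> * x)"
    using cx \<gamma> x by (intro mult_right_mono) simp_all
  then have "c * \<gamma> * x\<^sup>2 \<le> R * \<gamma> * x"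
    by (simp add: power2_eq_square mult_ac)
  moreover have "0 < c * R" "0 \<le> R * \<gamma> * x"
    using R \<gamma> c x by simp_all
  ultimately have "0 < c * R - c * \<gamma> * x\<^sup>2 + 2 * R * \<gamma> * x"
    by linarith
  moreover have "0 < R + \<gamma> * x\<^sup>2"
    using R \<gamma> by (simp add: add_pos_nonneg)
  ultimately show ?thesis
    unfolding share_drate_def by (intro divide_neg_pos) simp_all
qed

lemma fh_own_cost_effect_neg:
  assumes R: "0 < R" and \<gamma>: "0 \<le> \<gamma>" and x: "0 < x" and cx: "c * x < R"
    and agg: "R \<le> \<gamma> * x\<^sup>2 + S * x"
  shows "fh_dcost \<gamma> R x + fh_drate c \<gamma> R x * gH_dcost \<gamma> S x < 0"
proof -
  define D where "D = R + \<gamma> * x\<^sup>2"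
  define T where "T = 2 * \<gamma> * x + S"
  define Q where "Q = R - \<gamma> * x\<^sup>2 - 2 * c * x"
  have D: "0 < D"
    unfolding D_def using R \<gamma> by (simp add: add_pos_nonneg)
  have xT: "D \<le> x * T"
    unfolding D_def T_def using agg by (simp add: algebra_simps power2_eq_square)
  then have "0 < x * T"
    using D by linarith
  then have T: "0 < T"
    using x by (simp add: zero_less_mult_iff)
  have "D * D + R * Q = 2 * R * (R - c * x) + R * \<gamma> * x\<^sup>2 + (\<gamma> * x\<^sup>2)\<^sup>2"
    unfolding D_def Q_def by (simp add: algebra_simps power2_eq_square)
  also have "0 < \<dots>"
    using R \<gamma> cx by (simp add: add_pos_nonneg)
  moreover have "D * D \<le> D * (x * T)"
    using xT D by (intro mult_left_mono) simp_all
  ultimately have "0 < D * (x * T) + R * Q"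
    by linarith
  moreover have "fh_dcost \<gamma> R x + fh_drate c \<gamma> R x * gH_dcost \<gamma> S x
      = - (x * (D * (x * T) + R * Q)) / (D\<^sup>2 * T)"
    unfolding fh_dcost_def fh_drate_def gH_dcost_def D_def[symmetric] T_def[symmetric] Q_def[symmetric]
    using D T by (simp add: field_simps power2_eq_square)
  ultimately show ?thesis
    using D T x by (simp add: divide_neg_pos)
qed

lemma share_own_cost_effect_neg:
  assumes R: "0 < R" and \<gamma>: "0 \<le> \<gamma>" and x: "0 < x" and c: "0 < c" and cS: "c < S"
  shows "share_dcost \<gamma> R x + share_drate c \<gamma> R x * gH_dcost \<gamma> S x < 0"
proof -
  define D where "D = R + \<gamma> * x\<^sup>2"
  define T where "T = 2 * \<gamma> * x + S"
  define P where "P = c * R - c * \<gamma> * x\<^sup>2 + 2 * R * \<gamma> * x"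
  have D: "0 < D"
    unfolding D_def using R \<gamma> by (simp add: add_pos_nonneg)
  have T: "0 < T"
    unfolding T_def using \<gamma> x c cS by (simp add: add_nonneg_pos)
  have "D * T - P = R * (S - c) + 2 * \<gamma>\<^sup>2 * x ^ 3 + \<gamma> * x\<^sup>2 * (S + c)"
    unfolding D_def T_def P_def by (simp add: algebra_simps power2_eq_square power3_eq_cube)
  also have "0 < \<dots>"
    using R \<gamma> x c cS by (simp add: add_pos_nonneg)
  finally have "0 < D * T - P" .
  moreover have "share_dcost \<gamma> R x + share_drate c \<gamma> R x * gH_dcost \<gamma> S x
      = - (x * (D * T - P)) / (D\<^sup>2 * T)"
    unfolding share_dcost_def share_drate_def gH_dcost_def D_def[symmetric] T_def[symmetric] P_def[symmetric]
    using D T by (simp add: field_simps power2_eq_square)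
  ultimately show ?thesis
    using D T x by (simp add: divide_neg_pos)
qed

theorem proposition4p5:
  fixes N n i j :: nat and c h :: "nat \<Rightarrow> real" and R \<gamma> :: real
  assumes params: "valid_params N c R \<gamma>"
    and NE: "is_NE N c R \<gamma> h"
    and active: "active_set N h = {1..n}"
    and stable: "\<exists>\<epsilon>>0. \<forall>c' R' \<gamma>'. valid_params N c' R' \<gamma>' \<and> (\<forall>k\<in>{1..N}. \<bar>c' k - c k\<bar> < \<epsilon>)
                   \<and> \<bar>R' - R\<bar> < \<epsilon> \<and> \<bar>\<gamma>' - \<gamma>\<bar> < \<epsilon> \<longrightarrow>
                   (\<forall>h'. is_NE N c' R' \<gamma>' h' \<longrightarrow> active_set N h' = {1..n})"
    and i: "i \<in> {1..n}" and j: "j \<in> {1..n}" and ij: "i \<noteq> j"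
  defines "H \<equiv> gH n c \<gamma> R"
    and "D1 \<equiv> deriv (\<lambda>t. fh t \<gamma> R (gH n c \<gamma> R)) (c i)"
    and "D2 \<equiv> deriv (\<lambda>x. fh (c i) \<gamma> R x) (gH n c \<gamma> R) * deriv (\<lambda>t. gH n (c(i := t)) \<gamma> R) (c i)"
    and "E1 \<equiv> deriv (\<lambda>t. fh t \<gamma> R (gH n c \<gamma> R) / gH n c \<gamma> R) (c i)"
    and "E2 \<equiv> deriv (\<lambda>x. fh (c i) \<gamma> R x / x) (gH n c \<gamma> R) * deriv (\<lambda>t. gH n (c(i := t)) \<gamma> R) (c i)"
  shows "((\<lambda>t. fh t \<gamma> R (gH n (c(i := t)) \<gamma> R)) has_real_derivative D1 + D2) (at (c i))
         \<and> D1 + D2 < 0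
         \<and> ((\<lambda>t. fh (c i) \<gamma> R (gH n (c(j := t)) \<gamma> R)) has_real_derivative D2) (at (c j))
         \<and> D1 < 0
         \<and> (D2 > 0 \<longleftrightarrow> fh (c i) \<gamma> R H / H < 1 / 2)
         \<and> ((\<lambda>t. fh t \<gamma> R (gH n (c(i := t)) \<gamma> R) / gH n (c(i := t)) \<gamma> R)
              has_real_derivative E1 + E2) (at (c i))
         \<and> E1 + E2 < 0
         \<and> ((\<lambda>t. fh (c i) \<gamma> R (gH n (c(j := t)) \<gamma> R) / gH n (c(j := t)) \<gamma> R)
              has_real_derivative E2) (at (c j))
         \<and> E2 > 0
         \<and> E1 < 0"
proof -
  from params have R: "0 < R" and \<gamma>: "0 \<le> \<gamma>"
    unfolding valid_params_def by auto
  have active_iff: "k \<in> {1..n} \<longleftrightarrow> k \<in> {1..N} \<and> 0 < h k" for k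
    using active unfolding active_set_def by blast
  have n: "2 \<le> n"
    using i j ij by auto
  then have nN: "n \<le> N"
    using active_iff[of n] by simp
  have iN: "i \<in> {1..N}" and hi: "0 < h i"
    using active_iff[of i] i by simp_all
  then have ci: "0 < c i"
    using valid_params_cost_pos[OF params] by blast
  define S where "S = (\<Sum>k=1..n. c k)"
  have ci_S: "c i < S"
    unfolding S_def by (rule valid_params_cost_less_sum[OF params nN i j ij])
  have H_eq: "(\<Sum>k=1..N. h k) = H"
    unfolding H_def using is_NE_aggregate_eq_gH[OF params NE active] n by simp
  have H: "0 < H" and ciH: "c i * H < R"
    using is_NE_aggregate_pos[OF NE iN hi] is_NE_cost_aggregate_less[OF NE iN hi R \<gamma>] H_eq by simp_all
  have "\<gamma> * H\<^sup>2 + S * H = (real n - 1) * R"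
    using is_NE_aggregate_quadratic[OF NE active] n H_eq unfolding S_def by simp
  then have agg: "R \<le> \<gamma> * H\<^sup>2 + S * H"
    using n R by (simp add: mult_le_cancel_right1)
  have den: "0 < R + \<gamma> * H\<^sup>2"
    using R \<gamma> by (simp add: add_pos_nonneg)
  have dg: "((\<lambda>t. gH n (c(k := t)) \<gamma> R) has_real_derivative gH_dcost \<gamma> S H) (at (c k))"
    if "k \<in> {1..n}" for k
    using gH_has_real_derivative_cost[OF that, of c \<gamma> R] ci ci_S \<gamma> R unfolding S_def H_def by simp
  have D1: "D1 = fh_dcost \<gamma> R H" and D2: "D2 = fh_drate (c i) \<gamma> R H * gH_dcost \<gamma> S H"
    and E1: "E1 = share_dcost \<gamma> R H" and E2: "E2 = share_drate (c i) \<gamma> R H * gH_dcost \<gamma> S H"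
    using deriv_fh_cost deriv_fh_rate deriv_share_cost deriv_share_rate DERIV_imp_deriv[OF dg[OF i]] den H
    unfolding D1_def D2_def E1_def E2_def H_def[symmetric] by simp_all
  show ?thesis
    using fh_has_real_derivative[OF DERIV_ident dg[OF i]] fh_has_real_derivative[OF DERIV_const dg[OF j]]
      share_has_real_derivative[OF DERIV_ident dg[OF i]] share_has_real_derivative[OF DERIV_const dg[OF j]]
      fh_own_cost_effect_neg[OF R \<gamma> H ciH agg] share_own_cost_effect_neg[OF R \<gamma> H ci ci_S]
      fh_dcost_neg[OF den] share_dcost_neg[OF den H] fh_drate_neg_iff[OF R den H]
      share_drate_neg[OF R \<gamma> ci H ciH] gH_dcost_neg[OF \<gamma> _ H, of S] ci ci_S den H
    unfolding D1 D2 E1 E2 H_def by (simp add: zero_less_mult_iff mult_neg_neg)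
qed

end
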